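(* Every finitely generated $L^0(Y)$-submodule $\mathcal M$ of $L^2(X|Y)$ is closed with respect to the metric $d_{X|Y}$.
   Context: $(X,\mu)$ is a probability algebra ($\sigma$-complete Boolean algebra with strictly positive countably additive probability measure, not necessarily separable) and $Y\subseteq X$ a $\sigma$-complete subalgebra with $\nu=\mu|_Y$. $\tilde X,\tilde Y$ are the Stone spaces, $\tilde\mu,\tilde\nu$ the induced Baire–Radon probability measures, $\tilde\pi:\tilde X\to\tilde Y$ the induced continuous surjection; $L^0(X)$ is the space of a.e.-classes of complex Baire-measurable functions on $\tilde X$, and $L^0(Y)$ is identified with a subring of $L^0(X)$ via $g\mapsto g\circ\tilde\pi$; $\mathbb E(\cdot|Y)$ is conditional expectation (for nonnegative functions with values in $[0,\infty]$). $L^2(X|Y):=\{f\in L^0(X):\mathbb E(|f|^2|Y)<\infty\text{ a.e.}\}$, $\|f\|_{X|Y}:=\mathbb E(|f|^2|Y)^{1/2}$, and $d_{X|Y}(f,g):=\int_{\tilde Y}\min(1,\|f-g\|_{X|Y})\,d\tilde\nu$. A finitely generated $L^0(Y)$-submodule of $L^2(X|Y)$ is a set $\{\sum_{g\in F}a_gg:a_g\in L^0(Y)\}$ for some finite $F\subseteq L^2(X|Y)$. *)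

theory Defs
  imports "HOL-Probability.Probability"
begin

definition cond_norm :: "'a measure \<Rightarrow> 'a measure \<Rightarrow> ('a \<Rightarrow> complex) \<Rightarrow> 'a \<Rightarrow> ennreal" where
  "cond_norm M F f x =
     (let e = nn_cond_exp M F (\<lambda>y. ennreal ((cmod (f y))\<^sup>2)) x
      in if e = \<infinity> then \<infinity> else ennreal (sqrt (enn2real e)))"

definition L2_cond :: "'a measure \<Rightarrow> 'a measure \<Rightarrow> ('a \<Rightarrow> complex) set" where
  "L2_cond M F = {f. f \<in> borel_measurable M \<and>
      (AE x in M. nn_cond_exp M F (\<lambda>y. ennreal ((cmod (f y))\<^sup>2)) x < \<infinity>)}"

definition d_cond :: "'a measure \<Rightarrow> 'a measure \<Rightarrow> ('a \<Rightarrow> complex) \<Rightarrow> ('a \<Rightarrow> complex) \<Rightarrow> real" where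
  "d_cond M F f g =
     enn2real (\<integral>\<^sup>+ x. min 1 (cond_norm M F (\<lambda>y. f y - g y) x) \<partial>(restr_to_subalg M F))"

text \<open>The L0(F)-submodule generated by a finite set G (as a set of representatives,
  saturated under M-a.e. equality).\<close>
definition gen_module :: "'a measure \<Rightarrow> 'a measure \<Rightarrow> ('a \<Rightarrow> complex) set \<Rightarrow> ('a \<Rightarrow> complex) set" where
  "gen_module M F G = {h. h \<in> borel_measurable M \<and>
      (\<exists>a. (\<forall>g\<in>G. a g \<in> borel_measurable F) \<and>
           (AE x in M. h x = (\<Sum>g\<in>G. a g x * g x)))}"

end

theory Submission
  imports Defs
begin

(* Induction on the number of generators, by a conditional Gram-Schmidt step. Write
   <h, g> = E(h * cnj g | F) and let P h = h - (<h, g> / <g, g>) g be the part of h that is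
   conditionally orthogonal to the first generator g. For h in the module, h - f splits as
   (P h - P f) + beta g with P h - P f orthogonal to g and beta F-measurable, so the conditional
   Pythagoras identity gives E(|P h - P f|^2 | F) <= E(|h - f|^2 | F) pointwise and hence
   d(P h, P f) <= d(h, f). Therefore P f is a d-limit of elements of the module generated by the
   projections of the remaining generators, lies in it by induction, and f = P f + (<f, g> / <g, g>) g
   lies in the original module.
   The conditional expectations involved need not be integrable; their L0(F)-linearity is
   reduced to the integrable case by localising to the F-sets on which E(|X| | F) and the
   coefficients are bounded. *)

lemma borel_measurable_cnj [measurable]:
  fixes f :: "'b \<Rightarrow> complex"
  assumes [measurable]: "f \<in> borel_measurable N"
  shows "(\<lambda>x. cnj (f x)) \<in> borel_measurable N"
  unfolding borel_measurable_complex_iff by simp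

lemma AE_by_countable_cover:
  assumes "\<And>N::nat. AE x in M. x \<in> A N \<longrightarrow> P x" and "AE x in M. \<exists>N. x \<in> A N"
  shows "AE x in M. P x"
proof -
  have "AE x in M. \<forall>N. x \<in> A N \<longrightarrow> P x"
    using assms(1) by (subst AE_all_countable) blast
  with assms(2) show ?thesis by eventually_elim blast
qed

lemma borel_measurable_sum_mult:
  fixes a b :: "nat \<Rightarrow> 'b \<Rightarrow> complex"
  assumes "\<And>i. i < n \<Longrightarrow> a i \<in> borel_measurable N" and "\<And>i. i < n \<Longrightarrow> b i \<in> borel_measurable N"
  shows "(\<lambda>x. \<Sum>i<n. a i x * b i x) \<in> borel_measurable N"
proof (rule borel_measurable_sum)
  fix i assume "i \<in> {..<n}"
  then have [measurable]: "a i \<in> borel_measurable N" "b i \<in> borel_measurable N"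
    using assms by simp_all
  show "(\<lambda>x. a i x * b i x) \<in> borel_measurable N" by measurable
qed

lemma sum_set_eq_sum_nth:
  assumes "distinct xs"
  shows "(\<Sum>x\<in>set xs. f x) = (\<Sum>i<length xs. f (xs ! i))"
  by (rule sum.reindex_bij_betw[OF bij_betw_nth[OF assms refl refl], symmetric])

lemma abs_Re_Im_mult_cnj_le:
  fixes z w :: complex
  shows "\<bar>Re (z * cnj w)\<bar> \<le> \<bar>(cmod z)\<^sup>2 + (cmod w)\<^sup>2\<bar>"
    and "\<bar>Im (z * cnj w)\<bar> \<le> \<bar>(cmod z)\<^sup>2 + (cmod w)\<^sup>2\<bar>"
proof -
  have "cmod z * cmod w \<le> (cmod z)\<^sup>2 + (cmod w)\<^sup>2"
    using sum_squares_bound[of "cmod z" "cmod w"] mult_nonneg_nonneg[OF norm_ge_zero norm_ge_zero, of z w]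
    by linarith
  moreover have "\<bar>Re (z * cnj w)\<bar> \<le> cmod z * cmod w" "\<bar>Im (z * cnj w)\<bar> \<le> cmod z * cmod w"
    using abs_Re_le_cmod[of "z * cnj w"] abs_Im_le_cmod[of "z * cnj w"] by (simp_all add: norm_mult)
  ultimately show "\<bar>Re (z * cnj w)\<bar> \<le> \<bar>(cmod z)\<^sup>2 + (cmod w)\<^sup>2\<bar>"
    "\<bar>Im (z * cnj w)\<bar> \<le> \<bar>(cmod z)\<^sup>2 + (cmod w)\<^sup>2\<bar>"
    by auto
qed

context finite_measure_subalgebra
begin

section \<open>Conditionally integrable functions\<close>

lemma sets_subalgD: "A \<in> sets F \<Longrightarrow> A \<in> sets M"
  using subalg by (auto simp: subalgebra_def)

lemma space_subalg: "space F = space M"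
  using subalg by (auto simp: subalgebra_def)

definition cond_integrable :: "('a \<Rightarrow> real) \<Rightarrow> bool" where
  "cond_integrable X \<longleftrightarrow>
     X \<in> borel_measurable M \<and> (AE x in M. nn_cond_exp M F (\<lambda>y. ennreal \<bar>X y\<bar>) x < \<infinity>)"

lemma cond_integrable_measurable [measurable_dest]: "cond_integrable X \<Longrightarrow> X \<in> borel_measurable M"
  by (simp add: cond_integrable_def)

lemma cond_integrable_dominated:
  assumes ciZ: "cond_integrable Z" and [measurable]: "Y \<in> borel_measurable M"
    and le: "\<And>y. \<bar>Y y\<bar> \<le> \<bar>Z y\<bar>"
  shows "cond_integrable Y"
proof -
  have [measurable]: "Z \<in> borel_measurable M" using ciZ by simp
  have "AE x in M. nn_cond_exp M F (\<lambda>y. ennreal \<bar>Y y\<bar>) x \<le> nn_cond_exp M F (\<lambda>y. ennreal \<bar>Z y\<bar>) x"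
    by (rule nn_cond_exp_mono) (auto intro: ennreal_leI le)
  moreover have "AE x in M. nn_cond_exp M F (\<lambda>y. ennreal \<bar>Z y\<bar>) x < \<infinity>"
    using ciZ by (simp add: cond_integrable_def)
  ultimately have "AE x in M. nn_cond_exp M F (\<lambda>y. ennreal \<bar>Y y\<bar>) x < \<infinity>"
    by eventually_elim (rule le_less_trans)
  then show ?thesis
    by (simp add: cond_integrable_def)
qed

lemma cond_integrable_add:
  assumes ciX: "cond_integrable X" and ciY: "cond_integrable Y"
  shows "cond_integrable (\<lambda>y. X y + Y y)"
proof (rule cond_integrable_dominated)
  have [measurable]: "X \<in> borel_measurable M" "Y \<in> borel_measurable M" using ciX ciY by simp_all
  have "(\<lambda>y. ennreal \<bar>X y\<bar> + ennreal \<bar>Y y\<bar>) = (\<lambda>y. ennreal \<bar>\<bar>X y\<bar> + \<bar>Y y\<bar>\<bar>)"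
    by (auto simp: ennreal_plus)
  then have "AE x in M. nn_cond_exp M F (\<lambda>y. ennreal \<bar>X y\<bar>) x + nn_cond_exp M F (\<lambda>y. ennreal \<bar>Y y\<bar>) x
      = nn_cond_exp M F (\<lambda>y. ennreal \<bar>\<bar>X y\<bar> + \<bar>Y y\<bar>\<bar>) x"
    using nn_cond_exp_sum[of "\<lambda>y. ennreal \<bar>X y\<bar>" "\<lambda>y. ennreal \<bar>Y y\<bar>"] by simp
  moreover have "AE x in M. nn_cond_exp M F (\<lambda>y. ennreal \<bar>X y\<bar>) x < \<infinity>"
    "AE x in M. nn_cond_exp M F (\<lambda>y. ennreal \<bar>Y y\<bar>) x < \<infinity>"
    using ciX ciY by (simp_all add: cond_integrable_def)
  ultimately have "AE x in M. nn_cond_exp M F (\<lambda>y. ennreal \<bar>\<bar>X y\<bar> + \<bar>Y y\<bar>\<bar>) x < \<infinity>"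
    by eventually_elim (erule subst, simp)
  then show "cond_integrable (\<lambda>y. \<bar>X y\<bar> + \<bar>Y y\<bar>)"
    by (simp add: cond_integrable_def)
  show "(\<lambda>y. X y + Y y) \<in> borel_measurable M" by measurable
qed (simp add: abs_triangle_ineq)

lemma cond_integrable_mult:
  assumes ci: "cond_integrable X" and [measurable]: "c \<in> borel_measurable F"
  shows "cond_integrable (\<lambda>y. c y * X y)"
proof -
  have [measurable]: "X \<in> borel_measurable M" using ci by simp
  have [measurable]: "c \<in> borel_measurable M" by (rule measurable_from_subalg[OF subalg]) simp
  have "(\<lambda>y. ennreal \<bar>c y\<bar> * ennreal \<bar>X y\<bar>) = (\<lambda>y. ennreal \<bar>c y * X y\<bar>)"
    by (auto simp: ennreal_mult abs_mult)
  then have "AE x in M. ennreal \<bar>c x\<bar> * nn_cond_exp M F (\<lambda>y. ennreal \<bar>X y\<bar>) x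
      = nn_cond_exp M F (\<lambda>y. ennreal \<bar>c y * X y\<bar>) x"
    using nn_cond_exp_prod[of "\<lambda>y. ennreal \<bar>c y\<bar>" "\<lambda>y. ennreal \<bar>X y\<bar>"] by simp
  moreover have "AE x in M. nn_cond_exp M F (\<lambda>y. ennreal \<bar>X y\<bar>) x < \<infinity>"
    using ci by (simp add: cond_integrable_def)
  ultimately have "AE x in M. nn_cond_exp M F (\<lambda>y. ennreal \<bar>c y * X y\<bar>) x < \<infinity>"
    by eventually_elim (erule subst, simp add: ennreal_mult_less_top)
  then show ?thesis
    by (simp add: cond_integrable_def)
qed

lemma integrable_indicator_mult_cond_integrable:
  assumes ci: "cond_integrable X" and [measurable]: "c \<in> borel_measurable F" "A \<in> sets F"
    and N: "0 \<le> N"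
    and bound: "\<And>x. x \<in> A \<Longrightarrow> nn_cond_exp M F (\<lambda>y. ennreal \<bar>X y\<bar>) x \<le> ennreal N \<and> \<bar>c x\<bar> \<le> N"
  shows "integrable M (\<lambda>x. indicator A x * c x * X x)"
proof (rule integrableI_bounded)
  have [measurable]: "X \<in> borel_measurable M" using ci by simp
  have [measurable]: "c \<in> borel_measurable M" by (rule measurable_from_subalg[OF subalg]) simp
  have [measurable]: "A \<in> sets M" by (rule sets_subalgD) simp
  show "(\<lambda>x. indicator A x * c x * X x) \<in> borel_measurable M" by measurable
  have "(\<integral>\<^sup>+x. ennreal (norm (indicator A x * c x * X x)) \<partial>M)
      \<le> (\<integral>\<^sup>+x. ennreal (indicator A x * N) * ennreal \<bar>X x\<bar> \<partial>M)"
    using bound N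
    by (intro nn_integral_mono)
       (auto simp: abs_mult indicator_def simp flip: ennreal_mult intro!: ennreal_leI mult_right_mono)
  also have "\<dots> = (\<integral>\<^sup>+x. ennreal (indicator A x * N) * nn_cond_exp M F (\<lambda>y. ennreal \<bar>X y\<bar>) x \<partial>M)"
    by (rule nn_cond_exp_intg[symmetric]) auto
  also have "\<dots> \<le> (\<integral>\<^sup>+x. ennreal N * ennreal N \<partial>M)"
    using bound by (intro nn_integral_mono) (auto simp: indicator_def intro!: mult_left_mono)
  also have "\<dots> < \<infinity>"
    using finite_emeasure_space by (simp add: ennreal_mult_eq_top_iff less_top[symmetric])
  finally show "(\<integral>\<^sup>+x. ennreal (norm (indicator A x * c x * X x)) \<partial>M) < \<infinity>" .
qed

lemma cond_integrable_levels:
  assumes ci: "cond_integrable X" and [measurable]: "c \<in> borel_measurable F"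
  obtains A :: "nat \<Rightarrow> 'a set"
  where "\<And>N. A N \<in> sets F" "incseq A" "AE x in M. \<exists>N. x \<in> A N"
    "\<And>N. integrable M (\<lambda>x. indicator (A N) x * c x * X x)"
proof -
  define A where "A N = {x \<in> space M. nn_cond_exp M F (\<lambda>y. ennreal \<bar>X y\<bar>) x \<le> ennreal (real N)
    \<and> \<bar>c x\<bar> \<le> real N}" for N :: nat
  have A_sets: "A N \<in> sets F" for N
    unfolding A_def space_subalg[symmetric] by measurable
  have "incseq A"
    by (rule incseq_SucI) (auto simp: A_def elim!: order_trans intro!: ennreal_leI)
  have "AE x in M. nn_cond_exp M F (\<lambda>y. ennreal \<bar>X y\<bar>) x < \<infinity>"
    using ci by (simp add: cond_integrable_def)
  then have "AE x in M. \<exists>N. x \<in> A N"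
    using AE_space
  proof eventually_elim
    case (elim x)
    then obtain r where r: "nn_cond_exp M F (\<lambda>y. ennreal \<bar>X y\<bar>) x = ennreal r"
      by (cases "nn_cond_exp M F (\<lambda>y. ennreal \<bar>X y\<bar>) x") auto
    obtain N :: nat where "max r \<bar>c x\<bar> \<le> real N"
      using real_arch_simple by blast
    with r elim show ?case
      by (auto simp: A_def intro!: exI[of _ N] ennreal_leI)
  qed
  moreover have "integrable M (\<lambda>x. indicator (A N) x * c x * X x)" for N
    by (rule integrable_indicator_mult_cond_integrable[OF ci _ A_sets, of _ "real N"]) (auto simp: A_def)
  ultimately show ?thesis
    using that A_sets \<open>incseq A\<close> by blast
qed

lemma cond_integrable_common_levels:
  assumes ciX: "cond_integrable X" and ciY: "cond_integrable Y"
  obtains C :: "nat \<Rightarrow> 'a set"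
  where "AE x in M. \<exists>N. x \<in> C N" "\<And>N. C N \<in> sets F"
    "\<And>N. integrable M (\<lambda>x. indicator (C N) x * X x)"
    "\<And>N. integrable M (\<lambda>x. indicator (C N) x * Y x)"
proof -
  obtain A where A: "\<And>N. A N \<in> sets F" and "incseq A" and coverA: "AE x in M. \<exists>N. x \<in> A N"
    and intA: "\<And>N. integrable M (\<lambda>x. indicator (A N) x * 1 * X x)"
    by (rule cond_integrable_levels[OF ciX borel_measurable_const[of 1]]) (rule that)
  obtain B where B: "\<And>N. B N \<in> sets F" and "incseq B" and coverB: "AE x in M. \<exists>N. x \<in> B N"
    and intB: "\<And>N. integrable M (\<lambda>x. indicator (B N) x * 1 * Y x)"
    by (rule cond_integrable_levels[OF ciY borel_measurable_const[of 1]]) (rule that)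
  define C where "C N = A N \<inter> B N" for N
  have C_sets: "C N \<in> sets F" for N
    unfolding C_def using A B by blast
  have intX: "integrable M (\<lambda>x. indicator (C N) x * X x)" for N
    using integrable_mult_indicator[OF sets_subalgD intA, of "B N" N] B
    by (simp add: C_def indicator_inter_arith mult_ac)
  have intY: "integrable M (\<lambda>x. indicator (C N) x * Y x)" for N
    using integrable_mult_indicator[OF sets_subalgD intB, of "A N" N] A
    by (simp add: C_def indicator_inter_arith mult_ac)
  have "AE x in M. \<exists>N. x \<in> C N"
    using coverA coverB
  proof eventually_elim
    case (elim x)
    then obtain N1 N2 where "x \<in> A N1" "x \<in> B N2" by blast
    then have "x \<in> C (max N1 N2)"
      using incseqD[OF \<open>incseq A\<close>, of N1 "max N1 N2"] incseqD[OF \<open>incseq B\<close>, of N2 "max N1 N2"]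
      by (auto simp: C_def)
    then show ?case ..
  qed
  then show ?thesis
    by (rule that[OF _ C_sets intX intY])
qed

lemma nn_cond_exp_zero: "AE x in M. nn_cond_exp M F (\<lambda>_. 0) x = 0"
  using nn_cond_exp_F_meas[of "\<lambda>_. 0"] by auto

lemma real_cond_exp_zero: "AE x in M. real_cond_exp M F (\<lambda>_. 0) x = 0"
  using real_cond_exp_F_meas[of "\<lambda>_. 0"] by simp

lemma real_cond_exp_nonneg:
  assumes "\<And>y. 0 \<le> X y"
  shows "AE x in M. real_cond_exp M F X x = enn2real (nn_cond_exp M F (\<lambda>y. ennreal (X y)) x)"
proof -
  have "(\<lambda>y. ennreal (- X y)) = (\<lambda>_. 0)" using assms by (auto simp: ennreal_neg)
  with nn_cond_exp_zero show ?thesis unfolding real_cond_exp_def by auto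
qed

lemma real_cond_exp_mult_cond_integrable:
  assumes ci: "cond_integrable X" and c[measurable]: "c \<in> borel_measurable F"
  shows "AE x in M. real_cond_exp M F (\<lambda>y. c y * X y) x = c x * real_cond_exp M F X x"
proof -
  have [measurable]: "X \<in> borel_measurable M" using ci by simp
  have [measurable]: "c \<in> borel_measurable M" by (rule measurable_from_subalg[OF subalg]) simp
  obtain A where [measurable]: "\<And>N. A N \<in> sets F" and "incseq A" and cover: "AE x in M. \<exists>N. x \<in> A N"
    and int: "\<And>N. integrable M (\<lambda>x. indicator (A N) x * c x * X x)"
    by (rule cond_integrable_levels[OF ci c]) (rule that)
  show ?thesis
  proof (rule AE_by_countable_cover[OF _ cover])
    fix N
    have "AE x in M. real_cond_exp M F (\<lambda>x. (indicator (A N) x * c x) * X x) x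
        = (indicator (A N) x * c x) * real_cond_exp M F X x"
      by (rule real_cond_exp_mult) (auto simp: int)
    moreover have "AE x in M. real_cond_exp M F (\<lambda>x. indicator (A N) x * (c x * X x)) x
        = indicator (A N) x * real_cond_exp M F (\<lambda>x. c x * X x) x"
      by (rule real_cond_exp_mult) (auto simp: int mult.assoc[symmetric])
    ultimately show "AE x in M. x \<in> A N \<longrightarrow>
        real_cond_exp M F (\<lambda>y. c y * X y) x = c x * real_cond_exp M F X x"
      by eventually_elim (auto simp: mult.assoc indicator_def split: if_splits)
  qed
qed

lemma real_cond_exp_add_cond_integrable:
  assumes ciX: "cond_integrable X" and ciY: "cond_integrable Y"
  shows "AE x in M. real_cond_exp M F (\<lambda>y. X y + Y y) x = real_cond_exp M F X x + real_cond_exp M F Y x"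
proof -
  have [measurable]: "X \<in> borel_measurable M" "Y \<in> borel_measurable M" using ciX ciY by simp_all
  obtain C :: "nat \<Rightarrow> 'a set" where cover: "AE x in M. \<exists>N. x \<in> C N" and [measurable]: "\<And>N. C N \<in> sets F"
    and intX: "\<And>N. integrable M (\<lambda>x. indicator (C N) x * X x)"
    and intY: "\<And>N. integrable M (\<lambda>x. indicator (C N) x * Y x)"
    by (rule cond_integrable_common_levels[OF ciX ciY]) (rule that)
  have intXY: "integrable M (\<lambda>x. indicator (C N) x * (X x + Y x))" for N
    using Bochner_Integration.integrable_add[OF intX intY] by (simp add: distrib_left)
  show ?thesis
  proof (rule AE_by_countable_cover[OF _ cover])
    fix N
    have "AE x in M. real_cond_exp M F (\<lambda>x. indicator (C N) x * X x) x = indicator (C N) x * real_cond_exp M F X x"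
      by (rule real_cond_exp_mult) (auto simp: intX)
    moreover have "AE x in M. real_cond_exp M F (\<lambda>x. indicator (C N) x * Y x) x = indicator (C N) x * real_cond_exp M F Y x"
      by (rule real_cond_exp_mult) (auto simp: intY)
    moreover have "AE x in M. real_cond_exp M F (\<lambda>x. indicator (C N) x * (X x + Y x)) x
        = indicator (C N) x * real_cond_exp M F (\<lambda>x. X x + Y x) x"
      by (rule real_cond_exp_mult) (auto simp: intXY)
    moreover have "AE x in M. real_cond_exp M F (\<lambda>x. indicator (C N) x * X x + indicator (C N) x * Y x) x
        = real_cond_exp M F (\<lambda>x. indicator (C N) x * X x) x + real_cond_exp M F (\<lambda>x. indicator (C N) x * Y x) x"
      by (rule real_cond_exp_add[OF intX intY])
    ultimately show "AE x in M. x \<in> C N \<longrightarrow>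
        real_cond_exp M F (\<lambda>y. X y + Y y) x = real_cond_exp M F X x + real_cond_exp M F Y x"
      by eventually_elim (auto simp: distrib_left indicator_def split: if_splits)
  qed
qed

lemma real_cond_exp_lin_comb2:
  assumes "cond_integrable X" "cond_integrable Y" "c \<in> borel_measurable F" "d \<in> borel_measurable F"
  shows "AE x in M. real_cond_exp M F (\<lambda>y. c y * X y + d y * Y y) x
    = c x * real_cond_exp M F X x + d x * real_cond_exp M F Y x"
  using real_cond_exp_add_cond_integrable[OF cond_integrable_mult[OF assms(1,3)] cond_integrable_mult[OF assms(2,4)]]
    real_cond_exp_mult_cond_integrable[OF assms(1,3)] real_cond_exp_mult_cond_integrable[OF assms(2,4)]
  by eventually_elim simp

lemma real_cond_exp_lin_comb4:
  assumes "cond_integrable X1" "cond_integrable X2" "cond_integrable X3" "cond_integrable X4"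
    "c1 \<in> borel_measurable F" "c2 \<in> borel_measurable F" "c3 \<in> borel_measurable F" "c4 \<in> borel_measurable F"
  shows "AE x in M. real_cond_exp M F (\<lambda>y. (c1 y * X1 y + c2 y * X2 y) + (c3 y * X3 y + c4 y * X4 y)) x
    = (c1 x * real_cond_exp M F X1 x + c2 x * real_cond_exp M F X2 x)
      + (c3 x * real_cond_exp M F X3 x + c4 x * real_cond_exp M F X4 x)"
  using real_cond_exp_add_cond_integrable[OF
      cond_integrable_add[OF cond_integrable_mult[OF assms(1,5)] cond_integrable_mult[OF assms(2,6)]]
      cond_integrable_add[OF cond_integrable_mult[OF assms(3,7)] cond_integrable_mult[OF assms(4,8)]]]
    real_cond_exp_lin_comb2[OF assms(1,2,5,6)] real_cond_exp_lin_comb2[OF assms(3,4,7,8)]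
  by eventually_elim simp

section \<open>Conditionally square integrable functions\<close>

lemma L2_cond_iff: "h \<in> L2_cond M F \<longleftrightarrow> h \<in> borel_measurable M \<and> cond_integrable (\<lambda>y. (cmod (h y))\<^sup>2)"
  unfolding L2_cond_def cond_integrable_def by auto

lemma L2_cond_measurable [measurable_dest]: "h \<in> L2_cond M F \<Longrightarrow> h \<in> borel_measurable M"
  by (simp add: L2_cond_def)

lemma L2_cond_cond_integrable: "h \<in> L2_cond M F \<Longrightarrow> cond_integrable (\<lambda>y. (cmod (h y))\<^sup>2)"
  by (simp add: L2_cond_iff)

lemma L2_cond_add:
  assumes h: "h \<in> L2_cond M F" and g: "g \<in> L2_cond M F"
  shows "(\<lambda>y. h y + g y) \<in> L2_cond M F"
proof -
  have [measurable]: "h \<in> borel_measurable M" "g \<in> borel_measurable M" using h g by simp_all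
  have sq_bound: "(cmod (a + b))\<^sup>2 \<le> 2 * (cmod a)\<^sup>2 + 2 * (cmod b)\<^sup>2" for a b :: complex
  proof -
    have "(cmod (a + b))\<^sup>2 \<le> (cmod a + cmod b)\<^sup>2"
      by (simp add: power_mono norm_triangle_ineq)
    also have "\<dots> \<le> 2 * (cmod a)\<^sup>2 + 2 * (cmod b)\<^sup>2"
      using sum_squares_bound[of "cmod a" "cmod b"] unfolding power2_sum by linarith
    finally show ?thesis .
  qed
  have "cond_integrable (\<lambda>y. (\<lambda>_. 2) y * (cmod (h y))\<^sup>2 + (\<lambda>_. 2) y * (cmod (g y))\<^sup>2)"
    by (rule cond_integrable_add[OF cond_integrable_mult[OF L2_cond_cond_integrable[OF h]]
          cond_integrable_mult[OF L2_cond_cond_integrable[OF g]]]) simp_all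
  then have "cond_integrable (\<lambda>y. (cmod (h y + g y))\<^sup>2)"
  proof (rule cond_integrable_dominated)
    show "(\<lambda>y. (cmod (h y + g y))\<^sup>2) \<in> borel_measurable M" by measurable
  qed (use sq_bound in auto)
  then show ?thesis
    by (simp add: L2_cond_iff)
qed

lemma L2_cond_mult:
  assumes h: "h \<in> L2_cond M F" and [measurable]: "c \<in> borel_measurable F"
  shows "(\<lambda>y. c y * h y) \<in> L2_cond M F"
proof -
  have [measurable]: "h \<in> borel_measurable M" using h by simp
  have [measurable]: "c \<in> borel_measurable M" by (rule measurable_from_subalg[OF subalg]) simp
  have "cond_integrable (\<lambda>y. (\<lambda>y. (cmod (c y))\<^sup>2) y * (cmod (h y))\<^sup>2)"
    by (rule cond_integrable_mult[OF L2_cond_cond_integrable[OF h]]) measurable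
  then have "cond_integrable (\<lambda>y. (cmod (c y * h y))\<^sup>2)"
  proof (rule cond_integrable_dominated)
    show "(\<lambda>y. (cmod (c y * h y))\<^sup>2) \<in> borel_measurable M" by measurable
  qed (simp add: norm_mult power_mult_distrib)
  then show ?thesis
    by (simp add: L2_cond_iff)
qed

lemma L2_cond_diff:
  assumes "h \<in> L2_cond M F" and "g \<in> L2_cond M F"
  shows "(\<lambda>y. h y - g y) \<in> L2_cond M F"
proof -
  have "(\<lambda>y. h y + (\<lambda>_. -1) y * g y) \<in> L2_cond M F"
    by (rule L2_cond_add[OF assms(1) L2_cond_mult[OF assms(2)]]) simp
  then show ?thesis by simp
qed

lemma L2_cond_zero: "(\<lambda>_. 0) \<in> L2_cond M F"
  unfolding L2_cond_def using nn_cond_exp_zero by auto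

lemma L2_cond_sum:
  fixes n :: nat
  assumes "\<And>i. i < n \<Longrightarrow> g i \<in> L2_cond M F" and "\<And>i. i < n \<Longrightarrow> a i \<in> borel_measurable F"
  shows "(\<lambda>y. \<Sum>i<n. a i y * g i y) \<in> L2_cond M F"
  using assms
proof (induction n)
  case 0
  then show ?case using L2_cond_zero by simp
next
  case (Suc n)
  have "(\<lambda>y. (\<Sum>i<n. a i y * g i y) + a n y * g n y) \<in> L2_cond M F"
    by (rule L2_cond_add[OF Suc.IH L2_cond_mult]) (use Suc.prems in auto)
  then show ?case by simp
qed

lemma cond_integrable_Re_Im_mult_cnj:
  assumes "h \<in> L2_cond M F" and "g \<in> L2_cond M F"
  shows "cond_integrable (\<lambda>y. Re (h y * cnj (g y)))"
    and "cond_integrable (\<lambda>y. Im (h y * cnj (g y)))"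
proof -
  have [measurable]: "h \<in> borel_measurable M" "g \<in> borel_measurable M" using assms by simp_all
  have ci: "cond_integrable (\<lambda>y. (cmod (h y))\<^sup>2 + (cmod (g y))\<^sup>2)"
    using assms by (intro cond_integrable_add L2_cond_cond_integrable)
  show "cond_integrable (\<lambda>y. Re (h y * cnj (g y)))"
  proof (rule cond_integrable_dominated[OF ci])
    show "(\<lambda>y. Re (h y * cnj (g y))) \<in> borel_measurable M" by measurable
  qed (rule abs_Re_Im_mult_cnj_le)
  show "cond_integrable (\<lambda>y. Im (h y * cnj (g y)))"
  proof (rule cond_integrable_dominated[OF ci])
    show "(\<lambda>y. Im (h y * cnj (g y))) \<in> borel_measurable M" by measurable
  qed (rule abs_Re_Im_mult_cnj_le)
qed

section \<open>Conditional inner product\<close>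

definition cond_sqnorm :: "('a \<Rightarrow> complex) \<Rightarrow> 'a \<Rightarrow> real" where
  "cond_sqnorm h x = enn2real (nn_cond_exp M F (\<lambda>y. ennreal ((cmod (h y))\<^sup>2)) x)"

definition cond_inner :: "('a \<Rightarrow> complex) \<Rightarrow> ('a \<Rightarrow> complex) \<Rightarrow> 'a \<Rightarrow> complex" where
  "cond_inner h g x = complex_of_real (real_cond_exp M F (\<lambda>y. Re (h y * cnj (g y))) x)
     + \<i> * complex_of_real (real_cond_exp M F (\<lambda>y. Im (h y * cnj (g y))) x)"

lemma cond_sqnorm_measurable [measurable]: "cond_sqnorm h \<in> borel_measurable F"
  unfolding cond_sqnorm_def[abs_def] by measurable

lemma cond_inner_measurable [measurable]: "cond_inner h g \<in> borel_measurable F"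
  unfolding cond_inner_def[abs_def] by measurable

lemma cond_sqnorm_nonneg: "0 \<le> cond_sqnorm h x"
  by (simp add: cond_sqnorm_def)

lemma nn_cond_exp_L2_cond:
  "h \<in> L2_cond M F \<Longrightarrow> AE x in M. nn_cond_exp M F (\<lambda>y. ennreal ((cmod (h y))\<^sup>2)) x = ennreal (cond_sqnorm h x)"
  unfolding L2_cond_def cond_sqnorm_def
  by (auto elim!: eventually_mono simp: less_top[symmetric] ennreal_enn2real_if)

lemma real_cond_exp_norm_sq: "AE x in M. real_cond_exp M F (\<lambda>y. (cmod (h y))\<^sup>2) x = cond_sqnorm h x"
  using real_cond_exp_nonneg[of "\<lambda>y. (cmod (h y))\<^sup>2"] by (simp add: cond_sqnorm_def)

lemma cond_inner_linear_left:
  assumes h: "h \<in> L2_cond M F" and k: "k \<in> L2_cond M F" and g: "g \<in> L2_cond M F"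
    and [measurable]: "a \<in> borel_measurable F" "b \<in> borel_measurable F"
  shows "AE x in M. cond_inner (\<lambda>y. a y * h y + b y * k y) g x = a x * cond_inner h g x + b x * cond_inner k g x"
proof -
  note ci = cond_integrable_Re_Im_mult_cnj
  have re_eq: "(\<lambda>y. Re ((a y * h y + b y * k y) * cnj (g y))) =
     (\<lambda>y. ((\<lambda>y. Re (a y)) y * Re (h y * cnj (g y)) + (\<lambda>y. - Im (a y)) y * Im (h y * cnj (g y)))
        + ((\<lambda>y. Re (b y)) y * Re (k y * cnj (g y)) + (\<lambda>y. - Im (b y)) y * Im (k y * cnj (g y))))"
    by (auto simp: algebra_simps)
  have re: "AE x in M. real_cond_exp M F (\<lambda>y. Re ((a y * h y + b y * k y) * cnj (g y))) x =
      (Re (a x) * real_cond_exp M F (\<lambda>y. Re (h y * cnj (g y))) x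
        + - Im (a x) * real_cond_exp M F (\<lambda>y. Im (h y * cnj (g y))) x)
      + (Re (b x) * real_cond_exp M F (\<lambda>y. Re (k y * cnj (g y))) x
        + - Im (b x) * real_cond_exp M F (\<lambda>y. Im (k y * cnj (g y))) x)"
    unfolding re_eq by (rule real_cond_exp_lin_comb4[OF ci[OF h g] ci[OF k g]]) measurable
  have im_eq: "(\<lambda>y. Im ((a y * h y + b y * k y) * cnj (g y))) =
     (\<lambda>y. ((\<lambda>y. Im (a y)) y * Re (h y * cnj (g y)) + (\<lambda>y. Re (a y)) y * Im (h y * cnj (g y)))
        + ((\<lambda>y. Im (b y)) y * Re (k y * cnj (g y)) + (\<lambda>y. Re (b y)) y * Im (k y * cnj (g y))))"
    by (auto simp: algebra_simps)
  have im: "AE x in M. real_cond_exp M F (\<lambda>y. Im ((a y * h y + b y * k y) * cnj (g y))) x =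
      (Im (a x) * real_cond_exp M F (\<lambda>y. Re (h y * cnj (g y))) x
        + Re (a x) * real_cond_exp M F (\<lambda>y. Im (h y * cnj (g y))) x)
      + (Im (b x) * real_cond_exp M F (\<lambda>y. Re (k y * cnj (g y))) x
        + Re (b x) * real_cond_exp M F (\<lambda>y. Im (k y * cnj (g y))) x)"
    unfolding im_eq by (rule real_cond_exp_lin_comb4[OF ci[OF h g] ci[OF k g]]) measurable
  from re im show ?thesis
    by eventually_elim (simp add: cond_inner_def complex_eq_iff algebra_simps)
qed

lemma cond_inner_zero_left: "AE x in M. cond_inner (\<lambda>_. 0) g x = 0"
  using real_cond_exp_zero by eventually_elim (simp add: cond_inner_def)

lemma cond_inner_sum_left:
  fixes n :: nat
  assumes "\<And>i. i < n \<Longrightarrow> h i \<in> L2_cond M F" and "\<And>i. i < n \<Longrightarrow> b i \<in> borel_measurable F"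
    and g: "g \<in> L2_cond M F"
  shows "AE x in M. cond_inner (\<lambda>y. \<Sum>i<n. b i y * h i y) g x = (\<Sum>i<n. b i x * cond_inner (h i) g x)"
  using assms(1,2)
proof (induction n)
  case 0
  show ?case using cond_inner_zero_left by simp
next
  case (Suc n)
  have "(\<lambda>y. \<Sum>i<n. b i y * h i y) \<in> L2_cond M F"
    by (rule L2_cond_sum) (use Suc.prems in auto)
  then have "AE x in M. cond_inner (\<lambda>y. (\<lambda>_. 1) y * (\<Sum>i<n. b i y * h i y) + b n y * h n y) g x
      = 1 * cond_inner (\<lambda>y. \<Sum>i<n. b i y * h i y) g x + b n x * cond_inner (h n) g x"
    by (rule cond_inner_linear_left[OF _ _ g]) (use Suc.prems in auto)
  with Suc.IH Suc.prems show ?case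
    by (auto elim: eventually_rev_mp intro!: eventually_mono[OF _ AE_space])
qed

lemma cond_inner_self:
  assumes "g \<in> L2_cond M F"
  shows "AE x in M. cond_inner g g x = cond_sqnorm g x"
proof -
  have re_eq: "(\<lambda>y. Re (g y * cnj (g y))) = (\<lambda>y. (cmod (g y))\<^sup>2)"
    by (rule ext, subst cmod_power2) (simp add: power2_eq_square)
  have im_eq: "(\<lambda>y. Im (g y * cnj (g y))) = (\<lambda>y. 0)"
    by auto
  show ?thesis
    using real_cond_exp_norm_sq[of g] real_cond_exp_zero unfolding cond_inner_def re_eq im_eq
    by eventually_elim simp
qed

lemma cond_sqnorm_add_mult:
  assumes E: "E \<in> L2_cond M F" and g: "g \<in> L2_cond M F" and [measurable]: "b \<in> borel_measurable F"
  shows "AE x in M. cond_sqnorm (\<lambda>y. E y + b y * g y) x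
    = cond_sqnorm E x + (cmod (b x))\<^sup>2 * cond_sqnorm g x
      + 2 * (Re (b x) * Re (cond_inner E g x) + Im (b x) * Im (cond_inner E g x))"
proof -
  have [measurable]: "g \<in> borel_measurable M" "E \<in> borel_measurable M" using E g by simp_all
  have [measurable]: "b \<in> borel_measurable M" by (rule measurable_from_subalg[OF subalg]) simp
  have sq_eq: "(\<lambda>y. (cmod (E y + b y * g y))\<^sup>2) = (\<lambda>y. ((\<lambda>_. 1) y * (cmod (E y))\<^sup>2 + (\<lambda>y. (cmod (b y))\<^sup>2) y * (cmod (g y))\<^sup>2)
     + ((\<lambda>y. 2 * Re (b y)) y * Re (E y * cnj (g y)) + (\<lambda>y. 2 * Im (b y)) y * Im (E y * cnj (g y))))"
    by (simp only: cmod_power2) (simp add: power2_eq_square algebra_simps)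
  have "AE x in M. real_cond_exp M F (\<lambda>y. (cmod (E y + b y * g y))\<^sup>2) x =
     (1 * real_cond_exp M F (\<lambda>y. (cmod (E y))\<^sup>2) x + (cmod (b x))\<^sup>2 * real_cond_exp M F (\<lambda>y. (cmod (g y))\<^sup>2) x)
     + (2 * Re (b x) * real_cond_exp M F (\<lambda>y. Re (E y * cnj (g y))) x
        + 2 * Im (b x) * real_cond_exp M F (\<lambda>y. Im (E y * cnj (g y))) x)"
    unfolding sq_eq
    by (rule real_cond_exp_lin_comb4[OF L2_cond_cond_integrable[OF E] L2_cond_cond_integrable[OF g]
          cond_integrable_Re_Im_mult_cnj[OF E g]]) measurable
  with real_cond_exp_norm_sq[of "\<lambda>y. E y + b y * g y"] real_cond_exp_norm_sq[of E]
    real_cond_exp_norm_sq[of g]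
  show ?thesis
    by eventually_elim (simp add: cond_inner_def algebra_simps)
qed

lemma cond_sqnorm_le_add_orth:
  assumes "E \<in> L2_cond M F" "g \<in> L2_cond M F" "b \<in> borel_measurable F"
    and "AE x in M. cond_inner E g x = 0"
  shows "AE x in M. cond_sqnorm E x \<le> cond_sqnorm (\<lambda>y. E y + b y * g y) x"
  using cond_sqnorm_add_mult[OF assms(1-3)] assms(4)
  by eventually_elim (simp add: cond_sqnorm_nonneg)

lemma AE_cond_sqnorm_eq_0:
  assumes "h \<in> L2_cond M F"
  shows "AE x in M. cond_sqnorm h x = 0 \<longrightarrow> h x = 0"
proof -
  have [measurable]: "h \<in> borel_measurable M" using assms by simp
  define A where "A = {x \<in> space M. cond_sqnorm h x = 0}"
  have [measurable]: "A \<in> sets F"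
    unfolding A_def space_subalg[symmetric] by measurable
  then have [measurable]: "A \<in> sets M" by (rule sets_subalgD)
  have "(\<integral>\<^sup>+ x. indicator A x * ennreal ((cmod (h x))\<^sup>2) \<partial>M)
      = (\<integral>\<^sup>+ x. indicator A x * nn_cond_exp M F (\<lambda>y. ennreal ((cmod (h y))\<^sup>2)) x \<partial>M)"
    by (rule nn_cond_exp_intg[symmetric]) auto
  also have "\<dots> = (\<integral>\<^sup>+ x. indicator A x * ennreal (cond_sqnorm h x) \<partial>M)"
    by (rule nn_integral_cong_AE) (use nn_cond_exp_L2_cond[OF assms] in \<open>auto elim: eventually_mono\<close>)
  also have "\<dots> = (\<integral>\<^sup>+ x. 0 \<partial>M)"
    by (rule nn_integral_cong) (auto simp: A_def indicator_def)
  finally have "(\<integral>\<^sup>+ x. indicator A x * ennreal ((cmod (h x))\<^sup>2) \<partial>M) = 0"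
    by simp
  then have "AE x in M. indicator A x * ennreal ((cmod (h x))\<^sup>2) = 0"
    by (subst (asm) nn_integral_0_iff_AE) auto
  then show ?thesis
    using AE_space by eventually_elim (auto simp: A_def indicator_def)
qed

lemma AE_cond_inner_eq_0:
  assumes h: "h \<in> L2_cond M F" and g: "g \<in> L2_cond M F"
  shows "AE x in M. cond_sqnorm g x = 0 \<longrightarrow> cond_inner h g x = 0"
proof -
  have [measurable]: "h \<in> borel_measurable M" "g \<in> borel_measurable M" using h g by simp_all
  define A where "A = {x \<in> space M. cond_sqnorm g x = 0}"
  have [measurable]: "A \<in> sets F"
    unfolding A_def space_subalg[symmetric] by measurable
  then have [measurable]: "A \<in> sets M" by (rule sets_subalgD)
  have vanish: "AE x in M. x \<in> A \<longrightarrow> real_cond_exp M F (\<lambda>y. P (h y * cnj (g y))) x = 0"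
    if ci: "cond_integrable (\<lambda>y. P (h y * cnj (g y)))" and "P 0 = 0" for P :: "complex \<Rightarrow> real"
  proof -
    have [measurable]: "(\<lambda>y. P (h y * cnj (g y))) \<in> borel_measurable M" using ci by simp
    have "AE x in M. indicator A x * P (h x * cnj (g x)) = 0"
      using AE_cond_sqnorm_eq_0[OF g] by eventually_elim (auto simp: A_def indicator_def \<open>P 0 = 0\<close>)
    then have "AE x in M. real_cond_exp M F (\<lambda>y. indicator A y * P (h y * cnj (g y))) x
        = real_cond_exp M F (\<lambda>_. 0) x"
      by (intro real_cond_exp_cong) auto
    moreover have "AE x in M. real_cond_exp M F (\<lambda>y. indicator A y * P (h y * cnj (g y))) x
        = indicator A x * real_cond_exp M F (\<lambda>y. P (h y * cnj (g y))) x"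
      by (rule real_cond_exp_mult_cond_integrable[OF ci]) simp
    ultimately show ?thesis
      using real_cond_exp_zero
      by eventually_elim (auto simp: indicator_def)
  qed
  have "AE x in M. x \<in> A \<longrightarrow> real_cond_exp M F (\<lambda>y. Re (h y * cnj (g y))) x = 0"
    by (rule vanish[OF cond_integrable_Re_Im_mult_cnj(1)[OF h g]]) simp
  moreover have "AE x in M. x \<in> A \<longrightarrow> real_cond_exp M F (\<lambda>y. Im (h y * cnj (g y))) x = 0"
    by (rule vanish[OF cond_integrable_Re_Im_mult_cnj(2)[OF h g]]) simp
  ultimately show ?thesis
    using AE_space by eventually_elim (auto simp: A_def cond_inner_def)
qed

lemma cond_norm_measurable [measurable]: "cond_norm M F h \<in> borel_measurable F"
  unfolding cond_norm_def[abs_def] Let_def by measurable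

lemma cond_norm_L2_cond:
  "h \<in> L2_cond M F \<Longrightarrow> AE x in M. cond_norm M F h x = ennreal (sqrt (cond_sqnorm h x))"
  unfolding L2_cond_def by (auto elim!: eventually_mono simp: cond_norm_def cond_sqnorm_def Let_def)

lemma nn_integral_min_1_restr_to_subalg_finite:
  "(\<integral>\<^sup>+ x. min 1 (u x) \<partial>restr_to_subalg M F) < \<infinity>"
proof -
  interpret R: finite_measure "restr_to_subalg M F"
    by (rule finite_measure_restr_to_subalg[OF subalg]) unfold_locales
  have "(\<integral>\<^sup>+ x. min 1 (u x) \<partial>restr_to_subalg M F) \<le> (\<integral>\<^sup>+ x. 1 \<partial>restr_to_subalg M F)"
    by (rule nn_integral_mono) simp
  also have "\<dots> < \<infinity>"
    using R.finite_emeasure_space by (simp add: less_top[symmetric])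
  finally show ?thesis .
qed

lemma d_cond_nonneg: "0 \<le> d_cond M F f g"
  by (simp add: d_cond_def)

lemma d_cond_cong_AE:
  assumes [measurable]: "f \<in> borel_measurable M" "f' \<in> borel_measurable M"
    "g \<in> borel_measurable M" "g' \<in> borel_measurable M"
    and "AE x in M. f x = f' x" and "AE x in M. g x = g' x"
  shows "d_cond M F f g = d_cond M F f' g'"
proof -
  have "AE x in M. ennreal ((cmod (f x - g x))\<^sup>2) = ennreal ((cmod (f' x - g' x))\<^sup>2)"
    using assms(5,6) by eventually_elim simp
  then have "AE x in M. nn_cond_exp M F (\<lambda>y. ennreal ((cmod (f y - g y))\<^sup>2)) x
      = nn_cond_exp M F (\<lambda>y. ennreal ((cmod (f' y - g' y))\<^sup>2)) x"
    by (rule nn_cond_exp_cong) measurable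
  then have "AE x in M. cond_norm M F (\<lambda>y. f y - g y) x = cond_norm M F (\<lambda>y. f' y - g' y) x"
    by eventually_elim (simp add: cond_norm_def)
  then have "AE x in restr_to_subalg M F. cond_norm M F (\<lambda>y. f y - g y) x = cond_norm M F (\<lambda>y. f' y - g' y) x"
    by (rule AE_restr_to_subalg2[OF subalg]) measurable
  then show ?thesis
    unfolding d_cond_def by (intro arg_cong[where f = enn2real] nn_integral_cong_AE) (auto elim: eventually_mono)
qed

lemma d_cond_mono:
  assumes "(\<lambda>y. f y - g y) \<in> L2_cond M F" and "(\<lambda>y. f' y - g' y) \<in> L2_cond M F"
    and "AE x in M. cond_sqnorm (\<lambda>y. f' y - g' y) x \<le> cond_sqnorm (\<lambda>y. f y - g y) x"
  shows "d_cond M F f' g' \<le> d_cond M F f g"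
proof -
  have "AE x in M. min 1 (cond_norm M F (\<lambda>y. f' y - g' y) x) \<le> min 1 (cond_norm M F (\<lambda>y. f y - g y) x)"
    using cond_norm_L2_cond[OF assms(1)] cond_norm_L2_cond[OF assms(2)] assms(3)
    by eventually_elim (rule min.mono, simp, simp add: ennreal_leI real_sqrt_le_mono)
  then have "AE x in restr_to_subalg M F.
      min 1 (cond_norm M F (\<lambda>y. f' y - g' y) x) \<le> min 1 (cond_norm M F (\<lambda>y. f y - g y) x)"
    by (rule AE_restr_to_subalg2[OF subalg]) measurable
  then have "(\<integral>\<^sup>+ x. min 1 (cond_norm M F (\<lambda>y. f' y - g' y) x) \<partial>restr_to_subalg M F)
      \<le> (\<integral>\<^sup>+ x. min 1 (cond_norm M F (\<lambda>y. f y - g y) x) \<partial>restr_to_subalg M F)"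
    by (rule nn_integral_mono_AE)
  then show ?thesis
    unfolding d_cond_def by (rule enn2real_mono) (use nn_integral_min_1_restr_to_subalg_finite in simp)
qed

lemma AE_eq_if_d_cond_eq_0:
  assumes L2: "(\<lambda>y. f y - g y) \<in> L2_cond M F" and "d_cond M F f g = 0"
  shows "AE x in M. f x = g x"
proof -
  have "(\<integral>\<^sup>+ x. min 1 (cond_norm M F (\<lambda>y. f y - g y) x) \<partial>restr_to_subalg M F) = 0"
    using assms(2) nn_integral_min_1_restr_to_subalg_finite[of "cond_norm M F (\<lambda>y. f y - g y)"]
    unfolding d_cond_def by (auto simp: enn2real_eq_0_iff)
  then have "AE x in restr_to_subalg M F. min 1 (cond_norm M F (\<lambda>y. f y - g y) x) = 0"
    by (subst (asm) nn_integral_0_iff_AE) (auto intro: measurable_in_subalg[OF subalg])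
  then have "AE x in M. min 1 (cond_norm M F (\<lambda>y. f y - g y) x) = 0"
    by (rule AE_restr_to_subalg[OF subalg])
  with cond_norm_L2_cond[OF L2] AE_cond_sqnorm_eq_0[OF L2] show ?thesis
  proof eventually_elim
    case (elim x)
    then have "sqrt (cond_sqnorm (\<lambda>y. f y - g y) x) \<le> 0"
      by (auto simp: min_def ennreal_eq_0_iff split: if_splits)
    with cond_sqnorm_nonneg have "cond_sqnorm (\<lambda>y. f y - g y) x = 0"
      by (metis antisym real_sqrt_le_0_iff)
    with elim show ?case by simp
  qed
qed

section \<open>Conditional Gram-Schmidt step\<close>

(* Where cond_sqnorm g vanishes the division yields 0, and so does cond_inner h g
   (AE_cond_inner_eq_0); this is why no case distinction is needed. *)
definition proj_coeff :: "('a \<Rightarrow> complex) \<Rightarrow> ('a \<Rightarrow> complex) \<Rightarrow> 'a \<Rightarrow> complex" where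
  "proj_coeff g h x = cond_inner h g x / complex_of_real (cond_sqnorm g x)"

definition orth_part :: "('a \<Rightarrow> complex) \<Rightarrow> ('a \<Rightarrow> complex) \<Rightarrow> 'a \<Rightarrow> complex" where
  "orth_part g h = (\<lambda>y. h y - proj_coeff g h y * g y)"

lemma proj_coeff_measurable [measurable]: "proj_coeff g h \<in> borel_measurable F"
  unfolding proj_coeff_def[abs_def] by measurable

lemma orth_part_L2_cond: "g \<in> L2_cond M F \<Longrightarrow> h \<in> L2_cond M F \<Longrightarrow> orth_part g h \<in> L2_cond M F"
  unfolding orth_part_def by (rule L2_cond_diff, assumption, rule L2_cond_mult) simp_all

lemma cond_inner_orth_part:
  assumes g: "g \<in> L2_cond M F" and h: "h \<in> L2_cond M F"
  shows "AE x in M. cond_inner (orth_part g h) g x = 0"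
proof -
  have "AE x in M. cond_inner (\<lambda>y. (\<lambda>_. 1) y * h y + (\<lambda>y. - proj_coeff g h y) y * g y) g x
      = 1 * cond_inner h g x + - proj_coeff g h x * cond_inner g g x"
    by (rule cond_inner_linear_left[OF h g g]) simp_all
  moreover have "(\<lambda>y. (\<lambda>_. 1) y * h y + (\<lambda>y. - proj_coeff g h y) y * g y) = orth_part g h"
    by (auto simp: orth_part_def)
  ultimately have "AE x in M. cond_inner (orth_part g h) g x = cond_inner h g x - proj_coeff g h x * cond_inner g g x"
    by simp
  with cond_inner_self[OF g] AE_cond_inner_eq_0[OF h g] show ?thesis
    by eventually_elim (auto simp: proj_coeff_def)
qed

lemma cond_inner_sum_orth_part:
  fixes n :: nat
  assumes g: "g \<in> L2_cond M F" and hs: "\<And>i. i < n \<Longrightarrow> hs i \<in> L2_cond M F"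
    and a: "\<And>i. i < n \<Longrightarrow> a i \<in> borel_measurable F"
  shows "AE x in M. cond_inner (\<lambda>y. \<Sum>i<n. a i y * orth_part g (hs i) y) g x = 0"
proof -
  have "AE x in M. \<forall>i<n. cond_inner (orth_part g (hs i)) g x = 0"
    by (subst AE_all_countable) (auto intro: AE_mp[OF cond_inner_orth_part[OF g hs]])
  moreover have "AE x in M. cond_inner (\<lambda>y. \<Sum>i<n. a i y * orth_part g (hs i) y) g x
      = (\<Sum>i<n. a i x * cond_inner (orth_part g (hs i)) g x)"
    by (rule cond_inner_sum_left[OF _ a g]) (auto intro: orth_part_L2_cond[OF g] hs)
  ultimately show ?thesis
    by eventually_elim simp
qed

lemma d_cond_orth_part_le:
  fixes n :: nat
  assumes g: "g \<in> L2_cond M F" and hs: "\<And>i. i < n \<Longrightarrow> hs i \<in> L2_cond M F" and f: "f \<in> L2_cond M F"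
    and [measurable]: "a0 \<in> borel_measurable F" and a: "\<And>i. i < n \<Longrightarrow> a i \<in> borel_measurable F"
  shows "d_cond M F (\<lambda>y. \<Sum>i<n. a i y * orth_part g (hs i) y) (orth_part g f)
    \<le> d_cond M F (\<lambda>y. a0 y * g y + (\<Sum>i<n. a i y * hs i y)) f"
proof -
  define S where "S = (\<lambda>y. \<Sum>i<n. a i y * orth_part g (hs i) y)"
  define \<beta> where "\<beta> = (\<lambda>y. a0 y + (\<Sum>i<n. a i y * proj_coeff g (hs i) y) - proj_coeff g f y)"
  have S: "S \<in> L2_cond M F"
    unfolding S_def by (rule L2_cond_sum) (use a hs in \<open>auto intro: orth_part_L2_cond[OF g]\<close>)
  have Pf: "orth_part g f \<in> L2_cond M F"
    by (rule orth_part_L2_cond[OF g f])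
  have E: "(\<lambda>y. S y - orth_part g f y) \<in> L2_cond M F"
    by (rule L2_cond_diff[OF S Pf])
  have [measurable]: "(\<lambda>y. \<Sum>i<n. a i y * proj_coeff g (hs i) y) \<in> borel_measurable F"
    by (rule borel_measurable_sum_mult[OF a]) measurable
  then have \<beta>_meas [measurable]: "\<beta> \<in> borel_measurable F"
    unfolding \<beta>_def by measurable
  have orth_S: "AE x in M. cond_inner S g x = 0"
    unfolding S_def using hs a by (rule cond_inner_sum_orth_part[OF g])
  have "AE x in M. cond_inner (\<lambda>y. (\<lambda>_. 1) y * S y + (\<lambda>_. -1) y * orth_part g f y) g x
      = 1 * cond_inner S g x + (-1) * cond_inner (orth_part g f) g x"
    by (rule cond_inner_linear_left[OF S Pf g]) simp_all
  with orth_S cond_inner_orth_part[OF g f]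
  have orth_E: "AE x in M. cond_inner (\<lambda>y. S y - orth_part g f y) g x = 0"
    by eventually_elim simp
  have decomp: "(\<lambda>y. (a0 y * g y + (\<Sum>i<n. a i y * hs i y)) - f y) = (\<lambda>y. (S y - orth_part g f y) + \<beta> y * g y)"
    by (simp add: S_def \<beta>_def orth_part_def fun_eq_iff algebra_simps sum_subtractf
        sum_distrib_right sum_distrib_left sum.distrib)
  have D: "(\<lambda>y. (a0 y * g y + (\<Sum>i<n. a i y * hs i y)) - f y) \<in> L2_cond M F"
    unfolding decomp by (rule L2_cond_add[OF E L2_cond_mult[OF g \<beta>_meas]])
  have "AE x in M. cond_sqnorm (\<lambda>y. S y - orth_part g f y) x
      \<le> cond_sqnorm (\<lambda>y. (a0 y * g y + (\<Sum>i<n. a i y * hs i y)) - f y) x"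
    unfolding decomp by (rule cond_sqnorm_le_add_orth[OF E g \<beta>_meas orth_E])
  from d_cond_mono[OF D E this] show ?thesis
    by (simp add: S_def)
qed

section \<open>Finitely generated modules\<close>

(* Generators are given as a list since the projected generators map (orth_part g) gs
   may coincide. *)
definition list_module :: "('a \<Rightarrow> complex) list \<Rightarrow> ('a \<Rightarrow> complex) set" where
  "list_module gs = {h. h \<in> borel_measurable M \<and> (\<exists>a. (\<forall>i<length gs. a i \<in> borel_measurable F) \<and>
      (AE x in M. h x = (\<Sum>i<length gs. a i x * (gs ! i) x)))}"

lemma orth_part_approx_in_list_module:
  assumes g: "g \<in> L2_cond M F" and gs: "set gs \<subseteq> L2_cond M F" and f: "f \<in> L2_cond M F"
    and h: "h \<in> list_module (g # gs)"
  obtains h' where "h' \<in> list_module (map (orth_part g) gs)"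
    and "d_cond M F h' (orth_part g f) \<le> d_cond M F h f"
proof -
  obtain a where a: "\<forall>i<Suc (length gs). a i \<in> borel_measurable F" and hm: "h \<in> borel_measurable M"
    and hx: "AE x in M. h x = (\<Sum>i<Suc (length gs). a i x * ((g # gs) ! i) x)"
    using h by (auto simp: list_module_def)
  have hx': "AE x in M. h x = a 0 x * g x + (\<Sum>i<length gs. a (Suc i) x * (gs ! i) x)"
    using hx by (simp only: sum.lessThan_Suc_shift nth_Cons_0 nth_Cons_Suc)
  have gs_i: "gs ! i \<in> L2_cond M F" if "i < length gs" for i
    using gs that by auto
  define h' where "h' = (\<lambda>y. \<Sum>i<length gs. a (Suc i) y * orth_part g (gs ! i) y)"
  have "h' \<in> L2_cond M F"
    unfolding h'_def by (rule L2_cond_sum) (use a in \<open>auto intro: orth_part_L2_cond[OF g] gs_i\<close>)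
  then have "h' \<in> list_module (map (orth_part g) gs)"
    using a unfolding list_module_def by (auto simp: h'_def intro!: exI[of _ "\<lambda>i. a (Suc i)"])
  moreover have "d_cond M F h' (orth_part g f) \<le> d_cond M F h f"
  proof -
    have "(\<lambda>y. a 0 y * g y + (\<Sum>i<length gs. a (Suc i) y * (gs ! i) y)) \<in> L2_cond M F"
      using a by (intro L2_cond_add L2_cond_mult g L2_cond_sum gs_i) auto
    then have "d_cond M F h f = d_cond M F (\<lambda>y. a 0 y * g y + (\<Sum>i<length gs. a (Suc i) y * (gs ! i) y)) f"
      by (intro d_cond_cong_AE[OF hm L2_cond_measurable L2_cond_measurable[OF f] L2_cond_measurable[OF f] hx'])
        simp_all
    then show ?thesis
      unfolding h'_def using a by (auto intro!: d_cond_orth_part_le[OF g gs_i f])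
  qed
  ultimately show ?thesis
    by (rule that)
qed

lemma orth_part_approx_seq_in_list_module:
  assumes g: "g \<in> L2_cond M F" and gs: "set gs \<subseteq> L2_cond M F" and f: "f \<in> L2_cond M F"
    and fs: "\<And>k. fs k \<in> list_module (g # gs)"
  obtains fs' where "\<And>k. fs' k \<in> list_module (map (orth_part g) gs)"
    and "\<And>k. d_cond M F (fs' k) (orth_part g f) \<le> d_cond M F (fs k) f"
proof -
  have "\<forall>k. \<exists>h'. h' \<in> list_module (map (orth_part g) gs)
      \<and> d_cond M F h' (orth_part g f) \<le> d_cond M F (fs k) f"
  proof
    fix k
    obtain h' where "h' \<in> list_module (map (orth_part g) gs)"
      and "d_cond M F h' (orth_part g f) \<le> d_cond M F (fs k) f"
      by (rule orth_part_approx_in_list_module[OF g gs f fs])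
    then show "\<exists>h'. h' \<in> list_module (map (orth_part g) gs)
        \<and> d_cond M F h' (orth_part g f) \<le> d_cond M F (fs k) f"
      by blast
  qed
  from choice[OF this] obtain fs' where "\<forall>k. fs' k \<in> list_module (map (orth_part g) gs)
      \<and> d_cond M F (fs' k) (orth_part g f) \<le> d_cond M F (fs k) f"
    by blast
  then show ?thesis
    by (intro that[of fs']) simp_all
qed

lemma list_module_Cons_if_orth_part:
  assumes [measurable]: "f \<in> borel_measurable M"
    and "orth_part g f \<in> list_module (map (orth_part g) gs)"
  shows "f \<in> list_module (g # gs)"
proof -
  obtain b where b: "\<forall>i<length gs. b i \<in> borel_measurable F"
    and bx: "AE x in M. orth_part g f x = (\<Sum>i<length gs. b i x * orth_part g (gs ! i) x)"
    using assms(2) by (auto simp: list_module_def)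
  define a where "a = case_nat (\<lambda>x. proj_coeff g f x - (\<Sum>i<length gs. b i x * proj_coeff g (gs ! i) x)) b"
  have "(\<lambda>x. \<Sum>i<length gs. b i x * proj_coeff g (gs ! i) x) \<in> borel_measurable F"
    by (rule borel_measurable_sum_mult) (use b in simp, measurable)
  then have "\<forall>i<length (g # gs). a i \<in> borel_measurable F"
    using b by (auto simp: a_def less_Suc_eq_0_disj)
  moreover have "AE x in M. f x = (\<Sum>i<length (g # gs). a i x * ((g # gs) ! i) x)"
    using bx
  proof eventually_elim
    case (elim x)
    have "f x = orth_part g f x + proj_coeff g f x * g x"
      by (simp add: orth_part_def)
    also have "orth_part g f x = (\<Sum>i<length gs. b i x * (gs ! i) x)
        - (\<Sum>i<length gs. b i x * proj_coeff g (gs ! i) x) * g x"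
      unfolding elim
      by (simp add: orth_part_def right_diff_distrib sum_subtractf sum_distrib_right mult.assoc)
    also have "\<dots> + proj_coeff g f x * g x = a 0 x * g x + (\<Sum>i<length gs. a (Suc i) x * (gs ! i) x)"
      by (simp add: a_def algebra_simps)
    finally show ?case
      by (simp only: length_Cons sum.lessThan_Suc_shift nth_Cons_0 nth_Cons_Suc)
  qed
  ultimately show ?thesis
    using assms(1) unfolding list_module_def by blast
qed

lemma list_module_closed:
  assumes "set gs \<subseteq> L2_cond M F" and "\<And>k. fs k \<in> list_module gs" and "f \<in> L2_cond M F"
    and "(\<lambda>k. d_cond M F (fs k) f) \<longlonglongrightarrow> 0"
  shows "f \<in> list_module gs"
  using assms
proof (induction "length gs" arbitrary: gs fs f)
  case 0
  then have "gs = []" by simp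
  have [measurable]: "f \<in> borel_measurable M" using 0 by simp
  have "d_cond M F (fs k) f = d_cond M F (\<lambda>_. 0) f" for k
    using "0.prems"(2)[of k] \<open>gs = []\<close> by (intro d_cond_cong_AE) (auto simp: list_module_def)
  then have "d_cond M F (\<lambda>_. 0) f = 0"
    using "0.prems"(4) LIMSEQ_const_iff by fastforce
  then have "AE x in M. 0 = f x"
    by (rule AE_eq_if_d_cond_eq_0[rotated]) (rule L2_cond_diff[OF L2_cond_zero "0.prems"(3)])
  then show ?case
    using \<open>gs = []\<close> by (auto simp: list_module_def elim: eventually_mono)
next
  case (Suc n)
  then obtain g gs' where gs: "gs = g # gs'" by (cases gs) auto
  have g: "g \<in> L2_cond M F" and gs': "set gs' \<subseteq> L2_cond M F"
    using Suc.prems(1) gs by auto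
  obtain fs' where fs': "\<And>k. fs' k \<in> list_module (map (orth_part g) gs')"
    and le: "\<And>k. d_cond M F (fs' k) (orth_part g f) \<le> d_cond M F (fs k) f"
    by (rule orth_part_approx_seq_in_list_module[OF g gs' Suc.prems(3) Suc.prems(2)[unfolded gs]])
      (rule that)
  have "(\<lambda>k. d_cond M F (fs' k) (orth_part g f)) \<longlonglongrightarrow> 0"
    by (rule tendsto_sandwich[OF _ _ tendsto_const Suc.prems(4)]) (simp_all add: le d_cond_nonneg)
  then have "orth_part g f \<in> list_module (map (orth_part g) gs')"
  proof (rule Suc.hyps(1)[rotated -1])
    show "n = length (map (orth_part g) gs')" using Suc.hyps(2) gs by simp
    show "set (map (orth_part g) gs') \<subseteq> L2_cond M F" using gs' orth_part_L2_cond[OF g] by auto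
    show "orth_part g f \<in> L2_cond M F" by (rule orth_part_L2_cond[OF g Suc.prems(3)])
  qed (rule fs')
  then show ?case
    unfolding gs by (rule list_module_Cons_if_orth_part[OF L2_cond_measurable[OF Suc.prems(3)]])
qed

lemma gen_module_subset_list_module:
  assumes "distinct gs"
  shows "gen_module M F (set gs) \<subseteq> list_module gs"
proof
  fix h assume "h \<in> gen_module M F (set gs)"
  then obtain a where hm: "h \<in> borel_measurable M" and a: "\<forall>g\<in>set gs. a g \<in> borel_measurable F"
    and ae: "AE x in M. h x = (\<Sum>g\<in>set gs. a g x * g x)"
    unfolding gen_module_def by blast
  have "\<forall>i<length gs. a (gs ! i) \<in> borel_measurable F"
    using a by simp
  moreover have "AE x in M. h x = (\<Sum>i<length gs. a (gs ! i) x * (gs ! i) x)"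
    using ae by (simp only: sum_set_eq_sum_nth[OF assms])
  ultimately have "\<exists>a. (\<forall>i<length gs. a i \<in> borel_measurable F)
      \<and> (AE x in M. h x = (\<Sum>i<length gs. a i x * (gs ! i) x))"
    by (intro exI[where x = "\<lambda>i. a (gs ! i)"] conjI)
  with hm show "h \<in> list_module gs"
    unfolding list_module_def by blast
qed

lemma list_module_subset_gen_module:
  assumes "distinct gs"
  shows "list_module gs \<subseteq> gen_module M F (set gs)"
proof
  fix h assume "h \<in> list_module gs"
  then obtain a where hm: "h \<in> borel_measurable M" and a: "\<forall>i<length gs. a i \<in> borel_measurable F"
    and ae: "AE x in M. h x = (\<Sum>i<length gs. a i x * (gs ! i) x)"
    unfolding list_module_def by blast
  have bij: "bij_betw ((!) gs) {..<length gs} (set gs)"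
    by (rule bij_betw_nth[OF assms]) simp_all
  define idx where "idx = the_inv_into {..<length gs} ((!) gs)"
  have idx_nth: "idx (gs ! i) = i" if "i < length gs" for i
    using bij that unfolding idx_def bij_betw_def by (simp add: the_inv_into_f_f)
  have idx_less: "idx g < length gs" if "g \<in> set gs" for g
    using the_inv_into_into[of "(!) gs" "{..<length gs}" g "{..<length gs}"] bij that
    unfolding idx_def bij_betw_def by auto
  have sum_idx: "(\<Sum>g\<in>set gs. a (idx g) x * g x) = (\<Sum>i<length gs. a i x * (gs ! i) x)" for x
    unfolding sum_set_eq_sum_nth[OF assms] by (rule sum.cong) (simp_all add: idx_nth)
  have "\<forall>g\<in>set gs. a (idx g) \<in> borel_measurable F"
    using a idx_less by blast
  moreover have "AE x in M. h x = (\<Sum>g\<in>set gs. a (idx g) x * g x)"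
    using ae by (simp only: sum_idx)
  ultimately have "\<exists>a. (\<forall>g\<in>set gs. a g \<in> borel_measurable F) \<and> (AE x in M. h x = (\<Sum>g\<in>set gs. a g x * g x))"
    by (intro exI[where x = "\<lambda>g. a (idx g)"] conjI)
  with hm show "h \<in> gen_module M F (set gs)"
    unfolding gen_module_def by blast
qed

end

theorem lemma3p4:
  fixes M F :: "'a measure" and G :: "('a \<Rightarrow> complex) set"
  assumes "prob_space M"
    and "subalgebra M F"
    and "finite G"
    and "G \<subseteq> L2_cond M F"
  shows "\<forall>fs f. (\<forall>n. fs n \<in> gen_module M F G) \<longrightarrow> f \<in> L2_cond M F \<longrightarrow>
           (\<lambda>n. d_cond M F (fs n) f) \<longlonglongrightarrow> 0 \<longrightarrow> f \<in> gen_module M F G"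
proof (intro allI impI)
  fix fs f
  assume fs: "\<forall>n. fs n \<in> gen_module M F G" and f: "f \<in> L2_cond M F"
    and lim: "(\<lambda>n. d_cond M F (fs n) f) \<longlonglongrightarrow> 0"
  interpret prob_space M by fact
  interpret finite_measure_subalgebra M F
    by unfold_locales (rule assms(2))
  obtain gs where gs: "set gs = G" "distinct gs"
    using finite_distinct_list[OF assms(3)] by blast
  have eq: "gen_module M F G = list_module gs"
    unfolding gs(1)[symmetric]
    by (rule subset_antisym[OF gen_module_subset_list_module[OF gs(2)] list_module_subset_gen_module[OF gs(2)]])
  show "f \<in> gen_module M F G"
    unfolding eq
  proof (rule list_module_closed[OF _ _ f lim])
    show "set gs \<subseteq> L2_cond M F" using gs(1) assms(4) by simp
    show "fs k \<in> list_module gs" for k using fs eq by simp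
  qed
qed

end
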